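(* Let $p$ be a prime, $k \geq 1$ an integer, $N = p^{2k+1}$, and let $d$ be odd. In the coefficient-choosing game of degree $d$ over $\mathbb{Z}/N\mathbb{Z}$, Wanda has a winning strategy (whether she moves first or second).
   Context: The coefficient-choosing game of degree $d$ over a finite ring $R = \mathbb{Z}/N\mathbb{Z}$: Nora and Wanda alternately choose coefficients of $f(x) = a_d x^d + \cdots + a_0$; on each move the current player picks a not-yet-chosen coefficient and assigns it a value in $R$, subject to $a_d \neq 0$, $a_0 \neq 0$. After all $d+1$ coefficients are chosen, Wanda wins if $f$ has a root in $R$, and Nora wins otherwise. *)

theory Defs
  imports "HOL-Computational_Algebra.Primes"
begin

text \<open>Residues are represented by
naturals in {0..<N}.  A position is a partial assignment of coefficients
(index i \<le> d maps to Some value, or None if not yet chosen).\<close>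

definition legal_move :: "nat \<Rightarrow> nat \<Rightarrow> nat \<Rightarrow> nat \<Rightarrow> bool" where
  "legal_move N d i v \<longleftrightarrow> v < N \<and> ((i = d \<or> i = 0) \<longrightarrow> v \<noteq> 0)"

definition has_root :: "nat \<Rightarrow> nat \<Rightarrow> (nat \<Rightarrow> nat option) \<Rightarrow> bool" where
  "has_root N d a \<longleftrightarrow> (\<exists>x<N. (\<Sum>i\<le>d. the (a i) * x ^ i) mod N = 0)"

fun wanda_wins :: "nat \<Rightarrow> nat \<Rightarrow> nat \<Rightarrow> (nat \<Rightarrow> nat option) \<Rightarrow> bool \<Rightarrow> bool" where
  "wanda_wins N d 0 a t = has_root N d a"
| "wanda_wins N d (Suc m) a t =
     (if t then (\<exists>i\<le>d. a i = None \<and> (\<exists>v. legal_move N d i v \<and> wanda_wins N d m (a(i := Some v)) False))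
      else (\<forall>i\<le>d. a i = None \<longrightarrow> (\<forall>v. legal_move N d i v \<longrightarrow> wanda_wins N d m (a(i := Some v)) True)))"

definition wanda_wins_game :: "nat \<Rightarrow> nat \<Rightarrow> bool \<Rightarrow> bool" where
  "wanda_wins_game N d wanda_first = wanda_wins N d (Suc d) (\<lambda>_. None) wanda_first"

end

theory Submission
  imports Defs "HOL-Number_Theory.Cong"
begin

(* Moving second, Wanda mirrors Nora on the pairs {a_0, a_d}, {a_1, a_2}, {a_3, a_4}, ...:
   the two indices of a pair have opposite parity, so f(-1) = 0.
   Moving first, Wanda sets a_0 = p^(2k).  If a_1 = p^j u with p not dividing u and j < k
   (or d = 1), then x = p^(2k-j) z with u z = -1 (mod p) is a root modulo p^(2k+1): the
   constant and linear terms give p^(2k) (1 + u z), and every higher term is divisible by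
   p^(2(2k-j)).  Wanda secures a_1 = 1 herself unless Nora sets a_1 first; if Nora sets
   a_1 = p^k w, Wanda chooses a_2 with p dividing 1 + w + a_2, and then x = p^k is a root. *)

lemma has_rootI:
  assumes "0 < N" and "N dvd (\<Sum>i\<le>d. the (a i) * x ^ i)"
  shows "has_root N d a"
proof -
  have "[(\<Sum>i\<le>d. the (a i) * (x mod N) ^ i) = (\<Sum>i\<le>d. the (a i) * x ^ i)] (mod N)"
    by (intro cong_sum cong_mult cong_refl cong_pow) (simp add: cong_def)
  then have "(\<Sum>i\<le>d. the (a i) * (x mod N) ^ i) mod N = 0"
    using assms(2) by (simp add: cong_def)
  moreover have "x mod N < N" using assms(1) by simp
  ultimately show ?thesis unfolding has_root_def by (intro exI[of _ "x mod N"]) simp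
qed

lemma dvd_power_sum:
  fixes c :: "nat \<Rightarrow> nat"
  assumes "s \<le> Suc d"
    and "M dvd (\<Sum>i<s. c i * x ^ i)"
    and "\<And>i. s \<le> i \<Longrightarrow> i \<le> d \<Longrightarrow> M dvd x ^ i"
  shows "M dvd (\<Sum>i\<le>d. c i * x ^ i)"
proof -
  have "{..d} = {..<s} \<union> {s..d}" using assms(1) by auto
  then have "(\<Sum>i\<le>d. c i * x ^ i) = (\<Sum>i<s. c i * x ^ i) + (\<Sum>i=s..d. c i * x ^ i)"
    by (simp add: sum.union_disjoint ivl_disj_int)
  moreover have "M dvd (\<Sum>i=s..d. c i * x ^ i)"
    using assms(3) by (intro dvd_sum) auto
  ultimately show ?thesis using assms(2) by simp
qed

lemma ex_dvd_power_sum_linear_head: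
  fixes p k j u d :: nat and c :: "nat \<Rightarrow> nat"
  assumes p: "prime p" and u: "\<not> p dvd u" and d: "1 \<le> d" and j: "j \<le> 2 * k"
    and high: "d = 1 \<or> j < k"
    and c0: "c 0 = p ^ (2 * k)" and c1: "c 1 = p ^ j * u"
  shows "\<exists>x. p ^ (2 * k + 1) dvd (\<Sum>i\<le>d. c i * x ^ i)"
proof -
  have "coprime u p" using p u by (simp add: prime_imp_coprime coprime_commute)
  then obtain z where z: "[u * z = 1] (mod p)" using cong_solve_coprime_nat by auto
  define y where "y = (p - 1) * z"
  define x where "x = p ^ (2 * k - j) * y"
  have "[1 + u * y = 1 + (p - 1) * 1] (mod p)"
    unfolding y_def mult.left_commute[of u] by (intro cong_add cong_mult cong_refl z)
  moreover have "1 + (p - 1) * 1 = p" using prime_gt_0_nat[OF p] by simp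
  ultimately have "p dvd 1 + u * y" by (simp add: cong_def dvd_eq_mod_eq_0)
  then have "p ^ (2 * k) * p dvd p ^ (2 * k) * (1 + u * y)" by (rule mult_dvd_mono[OF dvd_refl])
  moreover have "(\<Sum>i<2. c i * x ^ i) = p ^ (2 * k) * (1 + u * y)"
  proof -
    have "c 1 * x = (p ^ j * p ^ (2 * k - j)) * (u * y)"
      unfolding c1 x_def by (simp only: ac_simps)
    also have "p ^ j * p ^ (2 * k - j) = p ^ (2 * k)" using j by (simp flip: power_add)
    finally have "c 1 * x = p ^ (2 * k) * (u * y)" .
    moreover have "(\<Sum>i<2. c i * x ^ i) = c 0 + c 1 * x"
      by (simp add: numeral_2_eq_2)
    ultimately show ?thesis by (simp add: c0 distrib_left)
  qed
  ultimately have head: "p ^ (2 * k + 1) dvd (\<Sum>i<2. c i * x ^ i)"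
    by (metis Suc_eq_plus1 power_Suc2)
  have tail: "p ^ (2 * k + 1) dvd x ^ i" if "2 \<le> i" "i \<le> d" for i
  proof -
    have "2 * k + 1 \<le> (2 * k - j) * 2" using high that by simp
    also have "\<dots> \<le> (2 * k - j) * i" using that by simp
    finally have "p ^ (2 * k + 1) dvd p ^ ((2 * k - j) * i)" by (rule le_imp_power_dvd)
    then show ?thesis unfolding x_def by (simp add: power_mult_distrib power_mult)
  qed
  have "p ^ (2 * k + 1) dvd (\<Sum>i\<le>d. c i * x ^ i)"
    by (rule dvd_power_sum[OF _ head tail]) (use d in simp)
  then show ?thesis ..
qed

lemma dvd_power_sum_quadratic_head:
  fixes p k w d :: nat and c :: "nat \<Rightarrow> nat"
  assumes k: "1 \<le> k" and d: "2 \<le> d"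
    and c0: "c 0 = p ^ (2 * k)" and c1: "c 1 = p ^ k * w" and c2: "p dvd 1 + w + c 2"
  shows "p ^ (2 * k + 1) dvd (\<Sum>i\<le>d. c i * (p ^ k) ^ i)"
proof (rule dvd_power_sum[of 3])
  have "{..<3::nat} = {0, 1, 2}" by auto
  then have "(\<Sum>i<3. c i * (p ^ k) ^ i) = p ^ (2 * k) * (1 + w + c 2)"
    by (simp add: c0 c1[unfolded One_nat_def] algebra_simps power2_eq_square flip: power_add mult_2)
  moreover have "p ^ (2 * k) * p dvd p ^ (2 * k) * (1 + w + c 2)"
    by (rule mult_dvd_mono[OF dvd_refl c2])
  ultimately show "p ^ (2 * k + 1) dvd (\<Sum>i<3. c i * (p ^ k) ^ i)"
    by (metis Suc_eq_plus1 power_Suc2)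
  show "p ^ (2 * k + 1) dvd (p ^ k) ^ i" if "3 \<le> i" for i
  proof -
    have "2 * k + 1 \<le> k * 3" using k by simp
    also have "\<dots> \<le> k * i" using that by simp
    finally have "p ^ (2 * k + 1) dvd p ^ (k * i)" by (rule le_imp_power_dvd)
    then show ?thesis by (simp add: power_mult)
  qed
qed (use d in simp)

section \<open>Positions in which every completion has a root\<close>

definition unchosen :: "nat \<Rightarrow> (nat \<Rightarrow> nat option) \<Rightarrow> nat set" where
  "unchosen d a = {i. i \<le> d \<and> a i = None}"

lemma finite_unchosen [simp]: "finite (unchosen d a)"
  unfolding unchosen_def by simp

lemma unchosen_upd: "unchosen d (a(i := Some v)) = unchosen d a - {i}"
  unfolding unchosen_def by auto

lemma card_unchosen_upd:
  "i \<in> unchosen d a \<Longrightarrow> card (unchosen d (a(i := Some v))) = card (unchosen d a) - 1"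
  by (simp add: unchosen_upd)

definition completes :: "nat \<Rightarrow> (nat \<Rightarrow> nat option) \<Rightarrow> (nat \<Rightarrow> nat option) \<Rightarrow> bool" where
  "completes d a b \<longleftrightarrow> (\<forall>i\<le>d. b i \<noteq> None \<and> (a i \<noteq> None \<longrightarrow> b i = a i))"

definition forces_root :: "nat \<Rightarrow> nat \<Rightarrow> (nat \<Rightarrow> nat option) \<Rightarrow> bool" where
  "forces_root N d a \<longleftrightarrow> (\<forall>b. completes d a b \<longrightarrow> has_root N d b)"

lemma forces_root_upd:
  assumes "forces_root N d a" and "a i = None"
  shows "forces_root N d (a(i := Some v))"
proof -
  have "completes d a b" if "completes d (a(i := Some v)) b" for b
    using that assms(2) unfolding completes_def by (metis fun_upd_other)
  then show ?thesis using assms(1) unfolding forces_root_def by blast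
qed

lemma wanda_wins_Suc_TrueI:
  assumes "i \<in> unchosen d a" and "legal_move N d i v"
    and "wanda_wins N d m (a(i := Some v)) False"
  shows "wanda_wins N d (Suc m) a True"
  using assms unfolding unchosen_def by auto

lemma wanda_wins_Suc_FalseI:
  assumes "\<And>i v. i \<in> unchosen d a \<Longrightarrow> legal_move N d i v \<Longrightarrow> wanda_wins N d m (a(i := Some v)) True"
  shows "wanda_wins N d (Suc m) a False"
  using assms unfolding unchosen_def by auto

lemma wanda_wins_if_forces_root:
  assumes "1 < N" and "card (unchosen d a) = m" and "forces_root N d a"
  shows "wanda_wins N d m a t"
  using assms(2,3)
proof (induction m arbitrary: a t)
  case 0
  then have "completes d a a" by (simp add: completes_def unchosen_def)
  with "0.prems"(2) show ?case by (simp add: forces_root_def)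
next
  case (Suc m)
  have move: "wanda_wins N d m (a(i := Some v)) t'" if i: "i \<in> unchosen d a" for i v t'
  proof (rule Suc.IH)
    show "card (unchosen d (a(i := Some v))) = m"
      using Suc.prems(1) i by (simp add: card_unchosen_upd)
    show "forces_root N d (a(i := Some v))"
      using Suc.prems(2) i by (simp add: forces_root_upd unchosen_def)
  qed
  obtain i where i: "i \<in> unchosen d a" using Suc.prems(1) by fastforce
  have "legal_move N d i 1" using assms(1) by (simp add: legal_move_def)
  with i have "wanda_wins N d (Suc m) a True" by (rule wanda_wins_Suc_TrueI[OF _ _ move[OF i]])
  moreover have "wanda_wins N d (Suc m) a False" by (rule wanda_wins_Suc_FalseI[OF move])
  ultimately show ?case by (cases t) simp_all
qed

lemma wanda_wins_by_forcing_move: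
  assumes "1 < N" and "card (unchosen d a) = Suc m" and "i \<in> unchosen d a"
    and "legal_move N d i v" and "forces_root N d (a(i := Some v))"
  shows "wanda_wins N d (Suc m) a True"
proof (rule wanda_wins_Suc_TrueI[OF assms(3,4)])
  have "card (unchosen d (a(i := Some v))) = m"
    using assms(2,3) by (simp add: card_unchosen_upd)
  then show "wanda_wins N d m (a(i := Some v)) False"
    by (rule wanda_wins_if_forces_root[OF assms(1) _ assms(5)])
qed

section \<open>Wanda moving second: the mirror strategy\<close>

definition partner :: "nat \<Rightarrow> nat \<Rightarrow> nat" where
  "partner d i = (if i = 0 then d else if i = d then 0 else if odd i then i + 1 else i - 1)"

lemma partner_le: "odd d \<Longrightarrow> i \<le> d \<Longrightarrow> partner d i \<le> d"
  unfolding partner_def by (auto elim: oddE)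

lemma partner_partner: "odd d \<Longrightarrow> i \<le> d \<Longrightarrow> partner d (partner d i) = i"
  unfolding partner_def by (auto elim: oddE)

lemma partner_neq: "odd d \<Longrightarrow> i \<le> d \<Longrightarrow> partner d i \<noteq> i"
  unfolding partner_def by (auto elim: oddE)

lemma partner_endpoint_iff:
  "odd d \<Longrightarrow> i \<le> d \<Longrightarrow> (partner d i = 0 \<or> partner d i = d) \<longleftrightarrow> (i = 0 \<or> i = d)"
  unfolding partner_def by (auto elim: oddE)

lemma even_partner_iff: "odd d \<Longrightarrow> i \<le> d \<Longrightarrow> even (partner d i) \<longleftrightarrow> odd i"
  unfolding partner_def by (auto elim: oddE)

definition mirrored :: "nat \<Rightarrow> (nat \<Rightarrow> 'a) \<Rightarrow> bool" where
  "mirrored d a \<longleftrightarrow> (\<forall>i\<le>d. a (partner d i) = a i)"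

lemma mirrored_upd:
  assumes "odd d" and "mirrored d a" and "i \<le> d"
  shows "mirrored d (a(i := y, partner d i := y))"
  unfolding mirrored_def
proof (intro allI impI)
  fix k assume k: "k \<le> d"
  show "(a(i := y, partner d i := y)) (partner d k) = (a(i := y, partner d i := y)) k"
  proof (cases "k = i \<or> k = partner d i")
    case True
    then show ?thesis using partner_partner[OF assms(1,3)] by auto
  next
    case False
    then have "partner d k \<noteq> i" "partner d k \<noteq> partner d i"
      using partner_partner[OF assms(1) k] partner_partner[OF assms(1,3)] by metis+
    with False k assms(2) show ?thesis by (simp add: mirrored_def)
  qed
qed

lemma alternating_sum_mirrored:
  fixes c :: "nat \<Rightarrow> int"
  assumes d: "odd d" and "mirrored d c"
  shows "(\<Sum>i\<le>d. (-1) ^ i * c i) = 0"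
proof -
  let ?g = "\<lambda>i. (-1) ^ i * c i"
  have "(\<Sum>i\<le>d. ?g i) = (\<Sum>i\<le>d. ?g (partner d i))"
    by (rule sum.reindex_bij_witness[of _ "partner d" "partner d"])
      (auto simp: partner_partner[OF d] partner_le[OF d])
  also have "\<dots> = (\<Sum>i\<le>d. - ?g i)"
    using assms by (intro sum.cong) (auto simp: mirrored_def minus_one_power_iff even_partner_iff)
  finally show ?thesis by (simp add: sum_negf)
qed

lemma has_root_if_mirrored:
  assumes d: "odd d" and N: "0 < N" and "mirrored d a"
  shows "has_root N d a"
proof (rule has_rootI[OF N])
  let ?c = "\<lambda>i. int (the (a i))"
  have "[(\<Sum>i\<le>d. ?c i * (int N - 1) ^ i) = (\<Sum>i\<le>d. ?c i * (-1) ^ i)] (mod int N)"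
    by (intro cong_sum cong_mult cong_refl cong_pow) (simp add: cong_iff_dvd_diff)
  moreover have "mirrored d ?c" using assms(3) by (simp add: mirrored_def)
  then have "(\<Sum>i\<le>d. ?c i * (-1) ^ i) = 0"
    using alternating_sum_mirrored[OF d] by (simp add: mult.commute)
  moreover have "int (\<Sum>i\<le>d. the (a i) * (N - 1) ^ i) = (\<Sum>i\<le>d. ?c i * (int N - 1) ^ i)"
    using N by (simp add: of_nat_diff)
  ultimately have "int N dvd int (\<Sum>i\<le>d. the (a i) * (N - 1) ^ i)"
    by (simp add: cong_0_iff)
  then show "N dvd (\<Sum>i\<le>d. the (a i) * (N - 1) ^ i)" by (simp only: int_dvd_int_iff)
qed

lemma wanda_wins_mirroring:
  assumes d: "odd d" and N: "1 < N"
  shows "card (unchosen d a) = m \<Longrightarrow> mirrored d a \<Longrightarrow> wanda_wins N d m a False"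
proof (induction m arbitrary: a rule: less_induct)
  case (less m a)
  show ?case
  proof (cases m)
    case 0
    then show ?thesis using has_root_if_mirrored[OF d _ less.prems(2)] N by simp
  next
    case (Suc m1)
    have "wanda_wins N d m1 (a(i := Some v)) True"
      if i: "i \<in> unchosen d a" and legal: "legal_move N d i v" for i v
    proof -
      let ?j = "partner d i" and ?a = "a(i := Some v)"
      have i_le: "i \<le> d" using i by (simp add: unchosen_def)
      have j: "?j \<in> unchosen d ?a"
        using i less.prems(2) partner_le[OF d i_le] partner_neq[OF d i_le]
        by (auto simp: unchosen_def mirrored_def)
      have card: "card (unchosen d ?a) = m1"
        using less.prems(1) i Suc by (simp add: card_unchosen_upd)
      with j obtain m2 where m2: "m1 = Suc m2"
        by (cases m1) (auto simp: card_eq_0_iff)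
      have "wanda_wins N d m2 (?a(?j := Some v)) False"
      proof (rule less.IH)
        show "m2 < m" using Suc m2 by simp
        show "card (unchosen d (?a(?j := Some v))) = m2"
          using card j m2 by (simp add: card_unchosen_upd)
        show "mirrored d (?a(?j := Some v))"
          using mirrored_upd[OF d less.prems(2) i_le] by simp
      qed
      moreover have "legal_move N d ?j v"
        using legal partner_endpoint_iff[OF d i_le] by (auto simp: legal_move_def)
      ultimately show ?thesis unfolding m2 using j by (intro wanda_wins_Suc_TrueI)
    qed
    then show ?thesis unfolding Suc by (rule wanda_wins_Suc_FalseI)
  qed
qed

section \<open>Wanda moving first\<close>

lemma forces_root_linear_head:
  fixes p k j u d :: nat
  assumes p: "prime p" and "\<not> p dvd u" and d: "1 \<le> d" and "j \<le> 2 * k"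
    and "d = 1 \<or> j < k"
    and a0: "a 0 = Some (p ^ (2 * k))" and a1: "a 1 = Some (p ^ j * u)"
  shows "forces_root (p ^ (2 * k + 1)) d a"
  unfolding forces_root_def
proof (intro allI impI)
  fix b assume "completes d a b"
  with d a0 a1 have b0: "the (b 0) = p ^ (2 * k)" and b1: "the (b 1) = p ^ j * u"
    by (auto simp: completes_def)
  from ex_dvd_power_sum_linear_head[OF assms(1-5), of "\<lambda>i. the (b i)", OF b0 b1]
  obtain x where "p ^ (2 * k + 1) dvd (\<Sum>i\<le>d. the (b i) * x ^ i)" ..
  then show "has_root (p ^ (2 * k + 1)) d b"
    by (rule has_rootI[rotated]) (simp add: prime_gt_0_nat[OF p])
qed

lemma forces_root_quadratic_head:
  fixes p k w c d :: nat
  assumes p: "prime p" and "1 \<le> k" and d: "2 \<le> d"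
    and a0: "a 0 = Some (p ^ (2 * k))" and a1: "a 1 = Some (p ^ k * w)" and a2: "a 2 = Some c"
    and "p dvd 1 + w + c"
  shows "forces_root (p ^ (2 * k + 1)) d a"
  unfolding forces_root_def
proof (intro allI impI)
  fix b assume "completes d a b"
  with d a0 a1 a2 have "the (b 0) = p ^ (2 * k)" "the (b 1) = p ^ k * w" "p dvd 1 + w + the (b 2)"
    using assms(7) by (auto simp: completes_def)
  then have "p ^ (2 * k + 1) dvd (\<Sum>i\<le>d. the (b i) * (p ^ k) ^ i)"
    by (rule dvd_power_sum_quadratic_head[OF assms(2) d])
  then show "has_root (p ^ (2 * k + 1)) d b"
    by (rule has_rootI[rotated]) (simp add: prime_gt_0_nat[OF p])
qed

lemma prime_power_factor_below:
  fixes p v n :: nat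
  assumes "prime p" and "0 < v" and "v < p ^ n"
  obtains j u where "v = p ^ j * u" and "\<not> p dvd u" and "j < n"
proof -
  have "v \<noteq> 0" "\<not> is_unit p" using assms(1,2) by (auto simp: not_prime_unit)
  then obtain u where u: "v = p ^ multiplicity p v * u" "\<not> p dvd u"
    by (rule multiplicity_decompose')
  then have "p ^ multiplicity p v \<le> v" using assms(2) by (cases u) auto
  then have "p ^ multiplicity p v < p ^ n" using assms(3) by linarith
  then have "multiplicity p v < n"
    using prime_gt_1_nat[OF assms(1)] by (simp add: power_strict_increasing_iff)
  with u show thesis by (rule that)
qed

lemma wanda_wins_by_setting_linear_coeff:
  fixes p k :: nat
  assumes p: "prime p" and k: "1 \<le> k" and d: "2 \<le> d"
    and a0: "a 0 = Some (p ^ (2 * k))" and a1: "1 \<in> unchosen d a"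
    and card: "card (unchosen d a) = Suc m"
  shows "wanda_wins (p ^ (2 * k + 1)) d (Suc m) a True"
proof (rule wanda_wins_by_forcing_move[OF _ card a1])
  show N: "1 < p ^ (2 * k + 1)" by (rule one_less_power[OF prime_gt_1_nat[OF p]]) simp
  then show "legal_move (p ^ (2 * k + 1)) d 1 1" using d by (simp add: legal_move_def)
  show "forces_root (p ^ (2 * k + 1)) d (a(1 := Some 1))"
    by (rule forces_root_linear_head[where j = 0 and u = 1])
      (use p k d a0 prime_gt_1_nat[OF p] in simp_all)
qed

lemma wanda_wins_by_balancing_quadratic_coeff:
  fixes p k w :: nat
  assumes p: "prime p" and k: "1 \<le> k"
    and a0: "a 0 = Some (p ^ (2 * k))" and a1: "a 1 = Some (p ^ k * w)" and a2: "2 \<in> unchosen d a"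
    and card: "card (unchosen d a) = Suc m"
  shows "wanda_wins (p ^ (2 * k + 1)) d (Suc m) a True"
proof -
  define c where "c = 2 * p - 1 - w mod p"
  have p1: "1 < p" using prime_gt_1_nat[OF p] .
  have d: "2 \<le> d" using a2 by (simp add: unchosen_def)
  have "w mod p < p" "p * (w div p) + w mod p = w" using p1 by simp_all
  then have "1 + w + c = p * (w div p) + p * 2" unfolding c_def by arith
  then have balanced: "p dvd 1 + w + c" by (simp flip: distrib_left)
  have "p * p \<le> p ^ (2 * k + 1)"
    using p1 k power_increasing[of 2 "2 * k + 1" p] by (simp add: power2_eq_square)
  moreover have "p \<le> c" "c < 2 * p" unfolding c_def using \<open>w mod p < p\<close> by simp_all
  ultimately have "legal_move (p ^ (2 * k + 1)) d 2 c"
    using p1 by (auto simp: legal_move_def intro: order.strict_trans2[of c "2 * p"])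
  moreover have "forces_root (p ^ (2 * k + 1)) d (a(2 := Some c))"
    using a0 a1 by (intro forces_root_quadratic_head[OF p k d _ _ _ balanced]) simp_all
  moreover have "1 < p ^ (2 * k + 1)" by (rule one_less_power[OF p1]) simp
  ultimately show ?thesis by (intro wanda_wins_by_forcing_move[OF _ card a2])
qed

lemma forces_root_if_linear_coeff_not_divisible:
  fixes p k v :: nat
  assumes p: "prime p" and d: "1 \<le> d"
    and a0: "a 0 = Some (p ^ (2 * k))" and a1: "a 1 = Some v"
    and v: "0 < v" "v < p ^ (2 * k + 1)" and not_dvd: "d = 1 \<or> \<not> p ^ k dvd v"
  shows "forces_root (p ^ (2 * k + 1)) d a"
proof -
  obtain j u where vju: "v = p ^ j * u" and u: "\<not> p dvd u" and j: "j < 2 * k + 1"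
    using prime_power_factor_below[OF p v] .
  have "j < k" if "d \<noteq> 1"
  proof (rule ccontr)
    assume "\<not> j < k"
    then have "p ^ k dvd p ^ j * u" by (simp add: le_imp_power_dvd)
    with not_dvd that show False unfolding vju by simp
  qed
  then have "d = 1 \<or> j < k" by blast
  with j show ?thesis
    by (intro forces_root_linear_head[of p u d j k a]) (use p u d a0 a1 vju in simp_all)
qed

lemma wanda_wins_after_opening:
  fixes p k d i v :: nat
  defines "a \<equiv> ((\<lambda>_. None)(0 := Some (p ^ (2 * k))))(i := Some v)"
  assumes p: "prime p" and k: "1 \<le> k" and i: "1 \<le> i" "i \<le> d"
    and legal: "legal_move (p ^ (2 * k + 1)) d i v"
  shows "wanda_wins (p ^ (2 * k + 1)) d (d - 1) a True"
proof -
  have N: "1 < p ^ (2 * k + 1)" by (rule one_less_power[OF prime_gt_1_nat[OF p]]) simp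
  have a0: "a 0 = Some (p ^ (2 * k))" using i by (simp add: a_def)
  have unchosen: "unchosen d a = {1..d} - {i}" using i by (auto simp: a_def unchosen_def)
  then have card: "card (unchosen d a) = d - 1" using i by simp
  show ?thesis
  proof (cases "i = 1")
    case False
    with i have d: "2 \<le> d" and a1: "1 \<in> unchosen d a" by (auto simp: unchosen)
    then have m: "d - 1 = Suc (d - 2)" by simp
    show ?thesis unfolding m
      by (rule wanda_wins_by_setting_linear_coeff[OF p k d a0 a1]) (use card m in simp)
  next
    case True
    then have a1: "a 1 = Some v" by (simp add: a_def)
    show ?thesis
    proof (cases "2 \<le> d \<and> p ^ k dvd v")
      case True
      then obtain w where w: "v = p ^ k * w" and d: "2 \<le> d" by blast
      have a2: "2 \<in> unchosen d a" using \<open>i = 1\<close> d by (simp add: unchosen)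
      from d have m: "d - 1 = Suc (d - 2)" by simp
      show ?thesis unfolding m
        by (rule wanda_wins_by_balancing_quadratic_coeff[OF p k a0 a1[unfolded w] a2])
          (use card m in simp)
    next
      case False
      with i have not_dvd: "d = 1 \<or> \<not> p ^ k dvd v" by auto
      have "v \<noteq> 0"
      proof
        assume "v = 0"
        with not_dvd legal \<open>i = 1\<close> show False by (simp add: legal_move_def)
      qed
      moreover have "v < p ^ (2 * k + 1)" using legal by (simp add: legal_move_def)
      ultimately have "forces_root (p ^ (2 * k + 1)) d a"
        using p i a0 a1 not_dvd
        by (intro forces_root_if_linear_coeff_not_divisible) simp_all
      then show ?thesis by (rule wanda_wins_if_forces_root[OF N card])
    qed
  qed
qed

lemma wanda_wins_moving_first:
  fixes p k d :: nat
  assumes p: "prime p" and k: "1 \<le> k" and d: "1 \<le> d"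
  shows "wanda_wins (p ^ (2 * k + 1)) d (Suc d) (\<lambda>_. None) True"
proof (rule wanda_wins_Suc_TrueI)
  show "0 \<in> unchosen d (\<lambda>_. None)" by (simp add: unchosen_def)
  show "legal_move (p ^ (2 * k + 1)) d 0 (p ^ (2 * k))"
    using prime_gt_1_nat[OF p] by (simp add: legal_move_def)
  obtain m where m: "d = Suc m" using d by (cases d) auto
  have "wanda_wins (p ^ (2 * k + 1)) d (Suc m) ((\<lambda>_. None)(0 := Some (p ^ (2 * k)))) False"
  proof (rule wanda_wins_Suc_FalseI)
    fix i v
    assume "i \<in> unchosen d ((\<lambda>_. None)(0 := Some (p ^ (2 * k))))"
      and "legal_move (p ^ (2 * k + 1)) d i v"
    then have "wanda_wins (p ^ (2 * k + 1)) d (d - 1) ((\<lambda>_. None)(0 := Some (p ^ (2 * k)), i := Some v)) True"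
      using p k by (intro wanda_wins_after_opening) (auto simp: unchosen_def split: if_splits)
    then show "wanda_wins (p ^ (2 * k + 1)) d m ((\<lambda>_. None)(0 := Some (p ^ (2 * k)), i := Some v)) True"
      using m by simp
  qed
  with m show "wanda_wins (p ^ (2 * k + 1)) d d ((\<lambda>_. None)(0 := Some (p ^ (2 * k)))) False"
    by simp
qed

theorem lemma6:
  fixes p k d :: nat
  assumes "prime p" and "k \<ge> 1" and "odd d"
  shows "wanda_wins_game (p ^ (2 * k + 1)) d True \<and> wanda_wins_game (p ^ (2 * k + 1)) d False"
proof
  from \<open>odd d\<close> have "1 \<le> d" by (simp add: odd_pos Suc_le_eq)
  with assms(1,2) show "wanda_wins_game (p ^ (2 * k + 1)) d True"
    unfolding wanda_wins_game_def by (rule wanda_wins_moving_first)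
  have "1 < p ^ (2 * k + 1)" by (rule one_less_power[OF prime_gt_1_nat[OF assms(1)]]) simp
  moreover have "card (unchosen d (\<lambda>_. None)) = Suc d" by (simp add: unchosen_def)
  moreover have "mirrored d (\<lambda>_. None)" by (simp add: mirrored_def)
  ultimately show "wanda_wins_game (p ^ (2 * k + 1)) d False"
    unfolding wanda_wins_game_def using wanda_wins_mirroring[OF assms(3)] by blast
qed

end
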